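(* Let $\Gamma=(V,E)$ be a directed graph (finite or infinite) in which every vertex has outdegree at most $M<\infty$ and at least one outgoing edge, and let $q>1$. Then there exists a unique vector $\overline{t}=(t_v)_{v\in V}\in[1,M^{1/(q-1)}]^V$ such that $$t_v^q = \sum_{w:\ vw\in E} t_w\qquad\text{for all } v\in V.$$
   Context: $vw\in E$ denotes a directed edge from $v$ to $w$. *)

theory Defs
  imports Complex_Main "HOL-Library.FuncSet"
begin

end

theory Submission
  imports Defs
begin

text \<open>
  Write N(v) for the out-neighbourhood of v and C = M^(1/(q-1)).  The equations
  t_v^q = \<Sum>_{w \<in> N(v)} t_w say that t is a fixed point of the operator
  (\<Phi> f)(v) = (\<Sum>_{w \<in> N(v)} f_w)^(1/q), here called root_sum.

  Existence.  \<Phi> is monotone and maps the box [1,C]^V into itself, because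
  1 \<le> |N(v)| \<le> M and (M C)^(1/q) = C.  A monotone self-map of a box of real
  functions has a fixed point (Knaster-Tarski): the pointwise supremum of all
  sub-solutions f \<le> \<Phi> f.

  Uniqueness.  A comparison principle: if t is a sub-solution and s a
  super-solution, both bounded and bounded away from 0, then t \<le> s.  With
  L = sup t/s one gets t \<le> L^(1/q) s, hence L \<le> L^(1/q), forcing L \<le> 1.
\<close>

definition root_sum :: "('a \<Rightarrow> 'a set) \<Rightarrow> real \<Rightarrow> ('a \<Rightarrow> real) \<Rightarrow> 'a \<Rightarrow> real" where
  "root_sum N q f v = (\<Sum>w\<in>N v. f w) powr (1 / q)"

lemma root_sum_mono:
  assumes N: "N v \<subseteq> V" and q: "q > 0"
    and f_nonneg: "\<And>w. w \<in> V \<Longrightarrow> 0 \<le> f w"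
    and f_le_g: "\<And>w. w \<in> V \<Longrightarrow> f w \<le> g w"
  shows "root_sum N q f v \<le> root_sum N q g v"
proof -
  have "(\<Sum>w\<in>N v. f w) \<le> (\<Sum>w\<in>N v. g w)"
    using N f_le_g by (intro sum_mono) auto
  moreover have "0 \<le> (\<Sum>w\<in>N v. f w)"
    using N f_nonneg by (intro sum_nonneg) auto
  ultimately show ?thesis
    unfolding root_sum_def using q by (intro powr_mono2) auto
qed

lemma box_bound_identity:
  fixes M q :: real
  assumes M: "1 \<le> M" and q: "q > 1"
  defines "C \<equiv> M powr (1 / (q - 1))"
  shows "1 \<le> C" and "(M * C) powr (1 / q) = C"
proof -
  show C1: "1 \<le> C" unfolding C_def using M q by (simp add: ge_one_powr_ge_zero)
  have "C powr q = M powr (q / (q - 1))" unfolding C_def by (simp add: powr_powr)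
  also have "q / (q - 1) = 1 + 1 / (q - 1)" using q by (simp add: field_simps)
  also have "M powr (1 + 1 / (q - 1)) = M * C" unfolding C_def using M by (simp add: powr_add)
  finally have "M * C = C powr q" by simp
  then show "(M * C) powr (1 / q) = C" using C1 q by (simp add: powr_powr)
qed

lemma root_sum_in_box:
  fixes M :: nat
  assumes N: "N v \<subseteq> V" "finite (N v)" "N v \<noteq> {}" "card (N v) \<le> M"
    and q: "q > 1"
    and f: "\<And>w. w \<in> V \<Longrightarrow> f w \<in> {1 .. real M powr (1 / (q - 1))}"
  shows "root_sum N q f v \<in> {1 .. real M powr (1 / (q - 1))}"
proof -
  define C where "C = real M powr (1 / (q - 1))"
  have "0 < card (N v)" using N by (simp add: card_gt_0_iff)
  then have M: "1 \<le> real M" using N(4) by linarith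
  note C = box_bound_identity[OF M q, folded C_def]
  have "real (card (N v)) = (\<Sum>w\<in>N v. 1)" by simp
  also have "\<dots> \<le> (\<Sum>w\<in>N v. f w)"
    using N f by (intro sum_mono) auto
  finally have lo: "1 \<le> (\<Sum>w\<in>N v. f w)"
    using \<open>0 < card (N v)\<close> by linarith
  have "(\<Sum>w\<in>N v. f w) \<le> (\<Sum>w\<in>N v. C)"
    using N f by (intro sum_mono) (auto simp: C_def)
  also have "\<dots> = card (N v) * C" by simp
  also have "\<dots> \<le> M * C" using N(4) C(1) by (intro mult_right_mono) auto
  finally have hi: "(\<Sum>w\<in>N v. f w) \<le> M * C" .
  have "1 \<le> root_sum N q f v"
    unfolding root_sum_def using lo q by (simp add: ge_one_powr_ge_zero)
  moreover have "root_sum N q f v \<le> (M * C) powr (1 / q)"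
    unfolding root_sum_def using lo hi q by (intro powr_mono2) auto
  ultimately show ?thesis using C(2) by (simp add: C_def)
qed

lemma root_sum_fixed_point:
  assumes "t v = root_sum N q t v" and "0 \<le> (\<Sum>w\<in>N v. t w)" and "q > 0"
  shows "t v powr q = (\<Sum>w\<in>N v. t w)"
  using assms by (simp add: root_sum_def powr_powr)

text \<open>
  Knaster-Tarski for the complete lattice [a,b]^V: a monotone operator that maps
  the box into itself has a fixed point there, namely the pointwise supremum of
  the set T of sub-solutions f \<le> F f.
\<close>
lemma monotone_box_fixed_point:
  fixes F :: "('a \<Rightarrow> real) \<Rightarrow> 'a \<Rightarrow> real" and a b :: real
  assumes ab: "a \<le> b"
    and maps: "\<And>f v. \<forall>w\<in>V. f w \<in> {a..b} \<Longrightarrow> v \<in> V \<Longrightarrow> F f v \<in> {a..b}"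
    and mono: "\<And>f g v. \<forall>w\<in>V. f w \<in> {a..b} \<Longrightarrow> \<forall>w\<in>V. g w \<in> {a..b} \<Longrightarrow>
                 \<forall>w\<in>V. f w \<le> g w \<Longrightarrow> v \<in> V \<Longrightarrow> F f v \<le> F g v"
  shows "\<exists>t. \<forall>v\<in>V. t v \<in> {a..b} \<and> t v = F t v"
proof -
  define T where "T = {f. \<forall>w\<in>V. f w \<in> {a..b} \<and> f w \<le> F f w}"
  define t where "t v = (SUP f\<in>T. f v)" for v
  have const_a: "(\<lambda>_. a) \<in> T" using maps ab by (auto simp: T_def)
  have bdd: "bdd_above ((\<lambda>f. f v) ` T)" if "v \<in> V" for v
    using that by (intro bdd_aboveI2[of _ _ b]) (auto simp: T_def)
  have t_upper: "f v \<le> t v" if "f \<in> T" "v \<in> V" for f v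
    unfolding t_def using cSUP_upper[OF that(1) bdd[OF that(2)]] .
  have t_box: "\<forall>v\<in>V. t v \<in> {a..b}"
    using t_upper[OF const_a] const_a
    by (auto simp: t_def T_def intro!: cSUP_least)
  have t_sub: "t v \<le> F t v" if v: "v \<in> V" for v
  proof -
    have "f v \<le> F t v" if f: "f \<in> T" for f
    proof -
      have "f v \<le> F f v" using f v by (simp add: T_def)
      also have "\<dots> \<le> F t v" using f t_box t_upper v by (intro mono) (auto simp: T_def)
      finally show ?thesis .
    qed
    then show ?thesis unfolding t_def using const_a by (auto intro!: cSUP_least)
  qed
  have "F t \<in> T"
    using maps[OF t_box] t_sub t_box by (auto simp: T_def intro!: mono)
  then have "F t v \<le> t v" if "v \<in> V" for v using t_upper that by blast
  then show ?thesis using t_box t_sub by (intro exI[of _ t]) (auto intro: antisym)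
qed

lemma le_root_imp_le_one:
  fixes L q :: real
  assumes "0 < L" and "q > 1" and "L \<le> L powr (1 / q)"
  shows "L \<le> 1"
proof (rule ccontr)
  assume "\<not> L \<le> 1"
  then have "L powr (1 / q) < L powr 1" using assms by (intro powr_less_mono) auto
  with assms show False by simp
qed

text \<open>
  A bounded positive sub-solution lies below every bounded positive
  super-solution.  The neighbourhoods may be infinite (then the sums vanish).
\<close>
lemma solution_comparison:
  fixes t s :: "'a \<Rightarrow> real" and q a b :: real
  assumes N: "\<And>u. u \<in> V \<Longrightarrow> N u \<subseteq> V" and q: "q > 1" and a: "0 < a"
    and t: "\<And>u. u \<in> V \<Longrightarrow> t u \<in> {a..b}"
    and s: "\<And>u. u \<in> V \<Longrightarrow> s u \<in> {a..b}"
    and t_sub: "\<And>u. u \<in> V \<Longrightarrow> t u powr q \<le> (\<Sum>w\<in>N u. t w)"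
    and s_super: "\<And>u. u \<in> V \<Longrightarrow> (\<Sum>w\<in>N u. s w) \<le> s u powr q"
    and v: "v \<in> V"
  shows "t v \<le> s v"
proof -
  define L where "L = (SUP u\<in>V. t u / s u)"
  have s_pos: "0 < s u" if "u \<in> V" for u using s[OF that] a by auto
  have bdd: "bdd_above ((\<lambda>u. t u / s u) ` V)"
  proof (rule bdd_aboveI2)
    fix u assume u: "u \<in> V"
    show "t u / s u \<le> b / a"
      using t[OF u] s[OF u] a by (intro frac_le) auto
  qed
  have t_le: "t u \<le> L * s u" if u: "u \<in> V" for u
    using cSUP_upper[OF u bdd] s_pos[OF u] by (simp add: L_def divide_le_eq)
  have "0 < t v / s v" using t[OF v] s_pos[OF v] a by simp
  also have "\<dots> \<le> L" unfolding L_def using cSUP_upper[OF v bdd] .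
  finally have L_pos: "0 < L" .
  have ratio: "t u / s u \<le> L powr (1 / q)" if u: "u \<in> V" for u
  proof -
    have "t u powr q \<le> (\<Sum>w\<in>N u. t w)" by (rule t_sub[OF u])
    also have "\<dots> \<le> (\<Sum>w\<in>N u. L * s w)"
      using N[OF u] t_le by (intro sum_mono) auto
    also have "\<dots> \<le> L * s u powr q"
      using s_super[OF u] L_pos by (simp add: sum_distrib_left[symmetric])
    finally have "(t u powr q) powr (1 / q) \<le> (L * s u powr q) powr (1 / q)"
      using t[OF u] a q by (intro powr_mono2) auto
    also have "(t u powr q) powr (1 / q) = t u"
      using t[OF u] a q by (simp add: powr_powr)
    also have "(L * s u powr q) powr (1 / q) = L powr (1 / q) * s u"
      using L_pos s_pos[OF u] q by (simp add: powr_mult powr_powr)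
    finally show ?thesis using s_pos[OF u] by (simp add: divide_le_eq)
  qed
  have "L \<le> L powr (1 / q)"
    unfolding L_def using v ratio by (intro cSUP_least) (auto simp: L_def)
  then have "L \<le> 1" using L_pos q by (rule le_root_imp_le_one[rotated 2])
  then have "L * s v \<le> s v" using s_pos[OF v] by simp
  then show ?thesis using t_le[OF v] by simp
qed

definition box_solution ::
    "'a set \<Rightarrow> ('a \<Rightarrow> 'a set) \<Rightarrow> real \<Rightarrow> real \<Rightarrow> ('a \<Rightarrow> real) \<Rightarrow> bool" where
  "box_solution V N q C t \<longleftrightarrow> (\<forall>v\<in>V. t v \<in> {1..C} \<and> t v powr q = (\<Sum>w\<in>N v. t w))"

lemma box_solution_exists:
  fixes M :: nat
  assumes N_sub: "\<And>v. v \<in> V \<Longrightarrow> N v \<subseteq> V"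
    and N_size: "\<And>v. v \<in> V \<Longrightarrow> finite (N v) \<and> N v \<noteq> {} \<and> card (N v) \<le> M"
    and q: "q > 1"
  shows "\<exists>t. box_solution V N q (real M powr (1 / (q - 1))) t"
proof (cases "V = {}")
  case True
  then show ?thesis by (simp add: box_solution_def)
next
  case False
  define C where "C = real M powr (1 / (q - 1))"
  obtain v0 where "v0 \<in> V" using False by blast
  then have "0 < card (N v0)" and "card (N v0) \<le> M" using N_size by (auto simp: card_gt_0_iff)
  then have "1 \<le> real M" by linarith
  then have C1: "1 \<le> C" unfolding C_def using q by (rule box_bound_identity(1))
  have "\<exists>t. \<forall>v\<in>V. t v \<in> {1..C} \<and> t v = root_sum N q t v"
  proof (rule monotone_box_fixed_point[OF C1])
    show "root_sum N q f v \<in> {1..C}" if "\<forall>w\<in>V. f w \<in> {1..C}" "v \<in> V" for f v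
      using root_sum_in_box[of N v V M q f] N_sub N_size[OF that(2)] q that by (simp add: C_def)
    show "root_sum N q f v \<le> root_sum N q g v"
      if "\<forall>w\<in>V. f w \<in> {1..C}" "\<forall>w\<in>V. g w \<in> {1..C}" "\<forall>w\<in>V. f w \<le> g w" "v \<in> V"
      for f g v
      using that q by (intro root_sum_mono[OF N_sub]) auto
  qed
  then obtain t where t: "\<forall>v\<in>V. t v \<in> {1..C} \<and> t v = root_sum N q t v" ..
  have t_eq: "t v powr q = (\<Sum>w\<in>N v. t w)" if v: "v \<in> V" for v
    using t v N_sub[OF v] q by (intro root_sum_fixed_point) (force intro!: sum_nonneg)+
  have "box_solution V N q C t" unfolding box_solution_def using t t_eq by blast
  then show ?thesis unfolding C_def by blast
qed

lemma box_solution_unique: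
  assumes N_sub: "\<And>v. v \<in> V \<Longrightarrow> N v \<subseteq> V" and q: "q > 1"
    and s: "box_solution V N q C s" and t: "box_solution V N q C t" and v: "v \<in> V"
  shows "s v = t v"
proof -
  have s_box: "1 \<le> s u \<and> s u \<le> C" and s_eq: "s u powr q = (\<Sum>w\<in>N u. s w)"
    if "u \<in> V" for u using s that by (auto simp: box_solution_def)
  have t_box: "1 \<le> t u \<and> t u \<le> C" and t_eq: "t u powr q = (\<Sum>w\<in>N u. t w)"
    if "u \<in> V" for u using t that by (auto simp: box_solution_def)
  have "s v \<le> t v"
    by (rule solution_comparison[where V = V and N = N and q = q and a = 1 and b = C])
      (simp_all add: N_sub q s_eq t_eq v s_box t_box)
  moreover have "t v \<le> s v"
    by (rule solution_comparison[where V = V and N = N and q = q and a = 1 and b = C])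
      (simp_all add: N_sub q s_eq t_eq v s_box t_box)
  ultimately show ?thesis by simp
qed

lemma box_solution_restrict:
  assumes N_sub: "\<And>v. v \<in> V \<Longrightarrow> N v \<subseteq> V" and t: "box_solution V N q C t"
  shows "box_solution V N q C (restrict t V)"
proof -
  have "(\<Sum>w\<in>N v. restrict t V w) = (\<Sum>w\<in>N v. t w)" if "v \<in> V" for v
    using N_sub[OF that] by (intro sum.cong) auto
  then show ?thesis using t by (simp add: box_solution_def)
qed

theorem lemma2p1:
  fixes V :: "'a set" and E :: "('a \<times> 'a) set" and M :: nat and q :: real
  assumes graph: "E \<subseteq> V \<times> V"
    and fin_out: "\<And>v. v \<in> V \<Longrightarrow> finite {w. (v, w) \<in> E}"
    and outdeg: "\<And>v. v \<in> V \<Longrightarrow> card {w. (v, w) \<in> E} \<le> M"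
    and out_nonempty: "\<And>v. v \<in> V \<Longrightarrow> \<exists>w. (v, w) \<in> E"
    and q: "q > 1"
  shows "\<exists>!t. t \<in> V \<rightarrow>\<^sub>E {1 .. real M powr (1 / (q - 1))} \<and>
              (\<forall>v\<in>V. t v powr q = (\<Sum>w\<in>{w. (v, w) \<in> E}. t w))"
proof -
  define N where "N v = {w. (v, w) \<in> E}" for v
  define C where "C = real M powr (1 / (q - 1))"
  have N_sub: "\<And>v. v \<in> V \<Longrightarrow> N v \<subseteq> V"
    using graph by (auto simp: N_def)
  have N_size: "finite (N v) \<and> N v \<noteq> {} \<and> card (N v) \<le> M" if "v \<in> V" for v
    using fin_out[OF that] outdeg[OF that] out_nonempty[OF that] by (auto simp: N_def)
  have solution_iff: "(t \<in> V \<rightarrow>\<^sub>E {1 .. real M powr (1 / (q - 1))} \<and>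
        (\<forall>v\<in>V. t v powr q = (\<Sum>w\<in>{w. (v, w) \<in> E}. t w)))
      \<longleftrightarrow> t \<in> extensional V \<and> box_solution V N q C t" for t
    unfolding box_solution_def PiE_iff Pi_iff N_def C_def by blast
  obtain t where t: "box_solution V N q C t"
    using box_solution_exists[where V = V and N = N, OF N_sub N_size q] unfolding C_def by blast
  have "\<exists>!t. t \<in> extensional V \<and> box_solution V N q C t"
  proof (rule ex1I[of _ "restrict t V"])
    show "restrict t V \<in> extensional V \<and> box_solution V N q C (restrict t V)"
      using box_solution_restrict[where V = V and N = N, OF N_sub t] by simp
    show "s = restrict t V" if "s \<in> extensional V \<and> box_solution V N q C s" for s
      using that box_solution_unique[where V = V and N = N, OF N_sub q _ t]
      by (intro extensionalityI[of _ V]) auto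
  qed
  then show ?thesis unfolding solution_iff .
qed

end
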